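(* Let $p={\rm char}(\mathbb{F}_q)>3$ and let $k$ be a positive integer. Then, as polynomials in $\mathbb{F}_q[x]$, $$2^{p^k}D_{p^k,3}(1,x)+1=3(1-4x)^{\frac{p^k-1}{2}}.$$
   Context: $q=p^e$ with $p>3$ prime. For $n\ge 1$ and $a\in\mathbb{F}_q$, $D_{n,3}(a,x)=\sum_{i=0}^{\lfloor n/2\rfloor}\frac{n-3i}{n-i}\binom{n-i}{i}(-x)^i a^{n-2i}\in\mathbb{F}_q[x]$, where each coefficient $\frac{n-3i}{n-i}\binom{n-i}{i}$ is an integer read modulo $p$; and $D_{0,3}(a,x)=-1$. *)

theory Defs
  imports "HOL-Computational_Algebra.Polynomial"
begin

text \<open>Integer coefficient (n-3i)/(n-i) * binom(n-i,i); the division is exact for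
  1 <= n and i <= n div 2.\<close>
definition dickson3_coeff :: "nat \<Rightarrow> nat \<Rightarrow> int" where
  "dickson3_coeff n i = ((int n - 3 * int i) * int ((n - i) choose i)) div int (n - i)"

definition D3 :: "nat \<Rightarrow> 'a::field \<Rightarrow> 'a poly" where
  "D3 n a = (if n = 0 then - 1 else
     (\<Sum>i\<in>{0..n div 2}. smult (of_int (dickson3_coeff n i) * a ^ (n - 2 * i)) ([:0, -1:] ^ i)))"

end

theory Submission
  imports Defs "HOL-Computational_Algebra.Primes"
begin

text \<open>
  The coefficients of D_{n,3}(1,x) are (-1)^i (C(n-i,i) - 2 C(n-i-1,i-1)), hence
  D_{n,3}(1,x) = E_n + 2x E_{n-2}, where E_n are the Dickson polynomials of the second kind,
  E_{n+2} = E_{n+1} - x E_n. Split (1 + t)^n = G_n(t^2) + t O_n(t^2); Pascal's rule shows that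
  O_{n+1}(1 - 4x) satisfies the recurrence of 2^n E_n, so over any field
  2^n D_{n,3}(1,x) = 4 O_n(1 - 4x) - O_{n+1}(1 - 4x). In odd characteristic p,
  (1 + t)^{p^k} = 1 + t^{p^k}, hence O_{p^k}(y) = y^{(p^k-1)/2}, G_{p^k}(y) = 1 and
  O_{p^k+1} = O_{p^k} + G_{p^k}, which turns the right-hand side into 3 y^{(p^k-1)/2} - 1.
\<close>

lemma coeff_one_linear_poly_power:
  "coeff ([:1, c:] ^ n) j = of_nat (n choose j) * (c ^ j :: 'a::comm_semiring_1)"
proof (cases "j \<le> n")
  case True
  then show ?thesis by (simp add: coeff_linear_poly_power)
next
  case False
  have "degree [:1, c:] \<le> 1"
    by (rule order_trans[OF degree_pCons_le]) simp
  then have "degree ([:1, c:] ^ n) \<le> n"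
    using degree_power_le[of "[:1, c:]" n] mult_le_mono1[of "degree [:1, c:]" 1 n] by linarith
  with False show ?thesis
    by (simp add: coeff_eq_0 binomial_eq_0)
qed

lemma of_nat_CHAR_power_choose:
  assumes "prime CHAR('a::comm_semiring_1)"
  shows "of_nat (CHAR('a) ^ k choose j) = (if j = 0 \<or> j = CHAR('a) ^ k then 1 else (0::'a))"
proof -
  have "[:1, 1:] ^ CHAR('a) ^ k = (monom (1::'a) 1 + 1) ^ CHAR('a) ^ k"
    by (simp add: monom_altdef one_pCons)
  also have "\<dots> = monom 1 (CHAR('a) ^ k) + 1"
    using assms by (simp add: freshmans_dream' monom_power)
  finally have "coeff ([:1, 1:] ^ CHAR('a) ^ k) j = coeff (monom (1::'a) (CHAR('a) ^ k) + 1) j"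
    by simp
  then show ?thesis
    using assms prime_gt_0_nat by (auto simp: coeff_one_linear_poly_power coeff_monom coeff_1)
qed

text \<open>(1 + t)^n = binomial_even_part n (t^2) + t * binomial_odd_part n (t^2)\<close>

definition binomial_even_part :: "nat \<Rightarrow> 'a::comm_semiring_1 \<Rightarrow> 'a" where
  "binomial_even_part n y = (\<Sum>l\<le>n. of_nat (n choose (2 * l)) * y ^ l)"

definition binomial_odd_part :: "nat \<Rightarrow> 'a::comm_semiring_1 \<Rightarrow> 'a" where
  "binomial_odd_part n y = (\<Sum>l\<le>n. of_nat (n choose (2 * l + 1)) * y ^ l)"

lemma binomial_even_part_0 [simp]: "binomial_even_part 0 y = 1"
  by (simp add: binomial_even_part_def)

lemma binomial_odd_part_0 [simp]: "binomial_odd_part 0 y = 0"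
  by (simp add: binomial_odd_part_def)

lemma binomial_odd_part_Suc:
  "binomial_odd_part (Suc n) y = binomial_odd_part n y + binomial_even_part n y"
  by (simp add: binomial_odd_part_def binomial_even_part_def binomial_eq_0
      distrib_right sum.distrib add.commute)

lemma binomial_even_part_Suc:
  "binomial_even_part (Suc n) y = binomial_even_part n y + y * binomial_odd_part n y"
proof -
  have "binomial_even_part n y = (\<Sum>l\<le>Suc n. of_nat (n choose (2 * l)) * y ^ l)"
    by (simp add: binomial_even_part_def binomial_eq_0)
  also have "\<dots> = 1 + (\<Sum>l\<le>n. of_nat (n choose (2 * l + 2)) * y ^ Suc l)"
    by (subst sum.atMost_Suc_shift) simp
  finally have even: "binomial_even_part n y
      = 1 + (\<Sum>l\<le>n. of_nat (n choose (2 * l + 2)) * y ^ Suc l)" .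
  have odd: "y * binomial_odd_part n y = (\<Sum>l\<le>n. of_nat (n choose (2 * l + 1)) * y ^ Suc l)"
    by (simp add: binomial_odd_part_def sum_distrib_left mult_ac)
  have "binomial_even_part (Suc n) y
      = 1 + (\<Sum>l\<le>n. of_nat ((n choose (2 * l + 1)) + (n choose (2 * l + 2))) * y ^ Suc l)"
    unfolding binomial_even_part_def by (subst sum.atMost_Suc_shift) simp
  then show ?thesis
    using even odd by (simp add: distrib_right sum.distrib add_ac)
qed

lemma binomial_odd_part_Suc_Suc:
  "binomial_odd_part (Suc (Suc n)) y
     = 2 * binomial_odd_part (Suc n) y - (1 - y) * binomial_odd_part n (y :: 'a::comm_ring_1)"
  by (simp add: binomial_odd_part_Suc binomial_even_part_Suc algebra_simps)

lemma binomial_parts_CHAR_power: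
  assumes "prime CHAR('a::comm_semiring_1)" and "odd CHAR('a)"
  shows "binomial_odd_part (CHAR('a) ^ k) y = y ^ ((CHAR('a) ^ k - 1) div 2)"
    and "binomial_even_part (CHAR('a) ^ k) y = (1::'a)"
proof -
  have "odd (CHAR('a) ^ k)"
    using assms(2) by simp
  then obtain m where m: "CHAR('a) ^ k = 2 * m + 1"
    using oddE by blast
  have "binomial_odd_part (CHAR('a) ^ k) y = (\<Sum>l\<le>CHAR('a) ^ k. if l = m then y ^ l else 0)"
    unfolding binomial_odd_part_def
  proof (rule sum.cong)
    show "of_nat (CHAR('a) ^ k choose (2 * l + 1)) * y ^ l = (if l = m then y ^ l else 0)" for l
      unfolding of_nat_CHAR_power_choose[OF assms(1)] unfolding m by simp
  qed simp
  then show "binomial_odd_part (CHAR('a) ^ k) y = y ^ ((CHAR('a) ^ k - 1) div 2)"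
    using m by simp
  have "binomial_even_part (CHAR('a) ^ k) y = (\<Sum>l\<le>CHAR('a) ^ k. if l = 0 then 1 else 0)"
    unfolding binomial_even_part_def
  proof (rule sum.cong)
    fix l
    have "2 * l \<noteq> 2 * m + 1"
      by presburger
    then show "of_nat (CHAR('a) ^ k choose (2 * l)) * y ^ l = (if l = 0 then 1 else 0)"
      unfolding of_nat_CHAR_power_choose[OF assms(1)] unfolding m by simp
  qed simp
  then show "binomial_even_part (CHAR('a) ^ k) y = 1"
    by simp
qed

fun dickson_second_kind :: "nat \<Rightarrow> 'a::comm_ring_1 \<Rightarrow> 'a" where
  "dickson_second_kind 0 x = 1"
| "dickson_second_kind (Suc 0) x = 1"
| "dickson_second_kind (Suc (Suc n)) x = dickson_second_kind (Suc n) x - x * dickson_second_kind n x"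

lemma two_power_mult_dickson_second_kind:
  "2 ^ n * dickson_second_kind n x = binomial_odd_part (Suc n) (1 - 4 * x)"
proof (induction n x rule: dickson_second_kind.induct)
  case (1 x)
  then show ?case by (simp add: binomial_odd_part_Suc)
next
  case (2 x)
  then show ?case by (simp add: binomial_odd_part_Suc binomial_even_part_Suc)
next
  case (3 n x)
  have "2 ^ Suc (Suc n) * dickson_second_kind (Suc (Suc n)) x
      = 2 * (2 ^ Suc n * dickson_second_kind (Suc n) x) - 4 * x * (2 ^ n * dickson_second_kind n x)"
    by (simp add: algebra_simps)
  also have "\<dots> = binomial_odd_part (Suc (Suc (Suc n))) (1 - 4 * x)"
    by (simp only: 3 binomial_odd_part_Suc_Suc[of "Suc n"]) simp
  finally show ?case .
qed

lemma coeff_dickson_second_kind: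
  "coeff (dickson_second_kind n [:0, 1:]) i = (-1) ^ i * of_nat ((n - i) choose i)"
proof (induction n "[:0, 1::'a::comm_ring_1:]" arbitrary: i rule: dickson_second_kind.induct)
  case 1
  then show ?case by (cases i) simp_all
next
  case 2
  then show ?case by (cases i) simp_all
next
  case (3 n)
  show ?case
  proof (cases i)
    case 0
    then show ?thesis using 3 by simp
  next
    case (Suc j)
    have pascal: "(Suc n - j) choose Suc j = ((n - j) choose Suc j) + ((n - j) choose j)"
      by (cases "j \<le> n") (simp_all add: Suc_diff_le binomial_eq_0)
    show ?thesis
      using 3 by (simp add: Suc pascal algebra_simps)
  qed
qed

lemma dickson3_coeff_0: "n > 0 \<Longrightarrow> dickson3_coeff n 0 = 1"
  unfolding dickson3_coeff_def by simp

lemma dickson3_coeff_Suc: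
  assumes "2 * Suc j \<le> n"
  shows "dickson3_coeff n (Suc j) = int ((n - Suc j) choose Suc j) - 2 * int ((n - 2 - j) choose j)"
proof -
  obtain N where N: "n - Suc j = Suc N"
    using assms gr0_implies_Suc[of "n - Suc j"] by auto
  then have "n - 2 - j = N"
    by simp
  have "(n - Suc j) * ((n - 2 - j) choose j) = ((n - Suc j) choose Suc j) * Suc j"
    unfolding N \<open>n - 2 - j = N\<close> by (rule Suc_times_binomial_eq)
  then have "int (n - Suc j) * int ((n - 2 - j) choose j) = int ((n - Suc j) choose Suc j) * int (Suc j)"
    by (simp only: of_nat_mult[symmetric])
  moreover have "int (n - Suc j) = int n - int (Suc j)"
    using assms by simp
  ultimately have "(int n - 3 * int (Suc j)) * int ((n - Suc j) choose Suc j)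
      = int (n - Suc j) * (int ((n - Suc j) choose Suc j) - 2 * int ((n - 2 - j) choose j))"
    by (simp add: algebra_simps)
  moreover have "int (n - Suc j) \<noteq> 0"
    using N by simp
  ultimately show ?thesis
    unfolding dickson3_coeff_def by simp
qed

lemma coeff_D3:
  assumes "n > 0"
  shows "coeff (D3 n (1::'a::field)) i
           = (if i \<le> n div 2 then of_int (dickson3_coeff n i) * (-1) ^ i else 0)"
proof -
  have "[:0, -1:] = monom (-1::'a) 1"
    by (simp add: monom_Suc monom_0)
  then have "coeff (D3 n (1::'a)) i
      = (\<Sum>l\<in>{0..n div 2}. of_int (dickson3_coeff n l) * (if l = i then (-1) ^ l else 0))"
    using assms unfolding D3_def by (simp add: coeff_sum monom_power)
  also have "\<dots> = (\<Sum>l\<in>{0..n div 2}. if l = i then of_int (dickson3_coeff n i) * (-1) ^ i else 0)"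
    by (intro sum.cong) auto
  finally show ?thesis
    by simp
qed

lemma D3_eq_dickson_second_kind:
  assumes "2 \<le> n"
  shows "D3 n (1::'a::field)
           = dickson_second_kind n [:0, 1:] + 2 * [:0, 1:] * dickson_second_kind (n - 2) [:0, 1:]"
proof (rule poly_eqI)
  fix i
  have coeff_two_X_mult: "coeff (2 * [:0, 1:] * q) i = (case i of 0 \<Rightarrow> 0 | Suc j \<Rightarrow> 2 * coeff q j)"
    for q :: "'a poly"
  proof -
    have "2 * [:0, 1:] * q = pCons 0 (smult 2 q)"
      by (simp add: numeral_poly)
    then show ?thesis
      by (simp split: nat.split)
  qed
  have rhs: "coeff (dickson_second_kind n [:0, 1::'a:] + 2 * [:0, 1:] * dickson_second_kind (n - 2) [:0, 1:]) i
      = (-1) ^ i * of_nat ((n - i) choose i)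
        + (case i of 0 \<Rightarrow> 0 | Suc j \<Rightarrow> 2 * ((-1) ^ j * of_nat ((n - 2 - j) choose j)))"
    by (simp only: coeff_add coeff_two_X_mult coeff_dickson_second_kind)
  have "coeff (D3 n (1::'a)) i
      = (-1) ^ i * of_nat ((n - i) choose i)
        + (case i of 0 \<Rightarrow> 0 | Suc j \<Rightarrow> 2 * ((-1) ^ j * of_nat ((n - 2 - j) choose j)))"
  proof (cases i)
    case 0
    then show ?thesis
      using assms by (simp add: coeff_D3 dickson3_coeff_0)
  next
    case (Suc j)
    show ?thesis
    proof (cases "2 * Suc j \<le> n")
      case True
      then have "Suc j \<le> n div 2"
        by presburger
      with True show ?thesis
        using assms by (simp add: Suc coeff_D3 dickson3_coeff_Suc algebra_simps)
    next
      case False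
      then have "\<not> Suc j \<le> n div 2" "n - Suc j < Suc j" "n - 2 - j < j"
        using assms by presburger+
      then show ?thesis
        using assms by (simp add: Suc coeff_D3 binomial_eq_0)
    qed
  qed
  then show "coeff (D3 n (1::'a)) i
      = coeff (dickson_second_kind n [:0, 1:] + 2 * [:0, 1:] * dickson_second_kind (n - 2) [:0, 1:]) i"
    unfolding rhs .
qed

lemma two_power_mult_D3:
  assumes "2 \<le> n"
  shows "2 ^ n * D3 n (1::'a::field)
           = 4 * binomial_odd_part n (1 - 4 * [:0, 1:]) - binomial_odd_part (Suc n) (1 - 4 * [:0, 1:])"
proof -
  obtain m where n: "n = Suc (Suc m)"
    using assms by (metis add_2_eq_Suc le_Suc_ex)
  define X :: "'a poly" where "X = [:0, 1:]"
  define y where "y = 1 - 4 * X"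
  have "n - 2 = m"
    using n by simp
  have D3_eq: "D3 n (1::'a) = dickson_second_kind n X + 2 * X * dickson_second_kind m X"
    using D3_eq_dickson_second_kind[where 'a = 'a, OF assms, unfolded \<open>n - 2 = m\<close>, folded X_def] .
  have "(2::'a poly) ^ n = 4 * 2 ^ m"
    using n by simp
  then have "2 ^ n * D3 n (1::'a)
      = 2 ^ n * dickson_second_kind n X + 2 * (4 * X) * (2 ^ m * dickson_second_kind m X)"
    unfolding D3_eq distrib_left by (simp only: mult_ac)
  also have "\<dots> = binomial_odd_part (Suc n) y + 2 * (4 * X) * binomial_odd_part (Suc m) y"
    by (simp only: two_power_mult_dickson_second_kind y_def)
  also have "\<dots> = 4 * binomial_odd_part n y - binomial_odd_part (Suc n) y"
  proof -
    have recurrence: "binomial_odd_part (Suc n) y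
        = 2 * binomial_odd_part n y - (1 - y) * binomial_odd_part (Suc m) y"
      using binomial_odd_part_Suc_Suc[of "Suc m" y] by (simp only: n)
    have "1 - y = 4 * X"
      by (simp add: y_def)
    show ?thesis
      unfolding recurrence \<open>1 - y = 4 * X\<close> by (simp add: algebra_simps)
  qed
  finally show ?thesis
    by (simp only: y_def X_def)
qed

theorem proposition2p7:
  fixes p k :: nat
  assumes "CHAR('a::{field,finite}) = p" and "p > 3" and "k > 0"
  shows "(2::'a poly) ^ (p ^ k) * D3 (p ^ k) (1::'a) + 1
           = 3 * ([:1, -4:] :: 'a poly) ^ ((p ^ k - 1) div 2)"
proof -
  have "CHAR('a) > 0"
    by (rule finite_imp_CHAR_pos) simp
  then have "prime p"
    using assms(1) prime_CHAR_semidom by blast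
  moreover have "odd p"
    using prime_odd_nat[OF \<open>prime p\<close>] assms(2) by simp
  ultimately have odd_part: "binomial_odd_part (p ^ k) y = y ^ ((p ^ k - 1) div 2)"
    and even_part: "binomial_even_part (p ^ k) y = 1" for y :: "'a poly"
    using binomial_parts_CHAR_power[where 'a = "'a poly"] assms(1) by simp_all
  have "2 \<le> p ^ k"
    using self_le_power[of p k] assms(2,3) by linarith
  have "[:1, -4:] = 1 - 4 * [:0, 1::'a:]"
    by (simp add: numeral_poly one_pCons)
  then have "(2::'a poly) ^ (p ^ k) * D3 (p ^ k) 1
      = 4 * binomial_odd_part (p ^ k) [:1, -4:] - binomial_odd_part (Suc (p ^ k)) [:1, -4:]"
    using two_power_mult_D3[OF \<open>2 \<le> p ^ k\<close>, where 'a = 'a] by simp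
  also have "\<dots> = 3 * [:1, -4:] ^ ((p ^ k - 1) div 2) - 1"
    by (simp add: binomial_odd_part_Suc odd_part even_part algebra_simps)
  finally show ?thesis
    by simp
qed

end
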